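(* Let $\alpha=(\alpha^+,0,\dots,0)\in[0,\infty)^n$ with $\alpha^+\in(0,\infty)^l$, $A=\Lambda_\alpha$, and let $\Gamma_1$ (resp. $\Gamma_0$) be a circle in $\mathbb{C}$ enclosing all entries of $\alpha^+$ but not $0$ (resp. enclosing $0$ but no entry of $\alpha^+$). For Hermitian $\tilde E$ (small enough that $\Lambda_\alpha+\tilde E$ has no eigenvalue on $\Gamma_0\cup\Gamma_1$) let $P_i(\tilde E)=\frac{1}{2\pi i}\int_{\Gamma_i}(zI-(\Lambda_\alpha+\tilde E))^{-1}\,dz$, $i=0,1$. Let $Z$ be Hermitian positive semi-definite with $\operatorname{Ran}Z\subseteq\operatorname{Ker}A$, and let $b>0$ be an upper bound for both $\|\tilde E\|$ and $\|Z\|$. Then $$P_1(\tilde E)ZP_0(\tilde E)=O(b^2),\qquad P_1(\tilde E)ZP_1(\tilde E)=O(b^3),$$ where the size of the errors is locally independent of $\alpha^+$.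
   Context: $\Lambda_v$ denotes the diagonal matrix with the vector $v$ on its diagonal; $\|\cdot\|$ is any matrix norm. *)

theory Defs
  imports "HOL-Analysis.Analysis" "HOL-Complex_Analysis.Complex_Analysis"
begin

text \<open>Complex n x n matrices are represented as complex^'n^'n, n = CARD('n).
  The norm on this type is the Frobenius norm (a matrix norm).\<close>

definition conj_transpose :: "complex^'n^'m \<Rightarrow> complex^'m^'n" where
  "conj_transpose M = (\<chi> i j. cnj (M $ j $ i))"

definition hermitian :: "complex^'n^'n \<Rightarrow> bool" where
  "hermitian M \<longleftrightarrow> conj_transpose M = M"

definition psd :: "complex^'n^'n \<Rightarrow> bool" where
  "psd M \<longleftrightarrow> hermitian M \<and>
     (\<forall>x::complex^'n. 0 \<le> Re (\<Sum>i\<in>UNIV. cnj (x $ i) * (M *v x) $ i))"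

definition diag_mat :: "real^'n \<Rightarrow> complex^'n^'n" where
  "diag_mat v = (\<chi> i j. if i = j then complex_of_real (v $ i) else 0)"

definition riesz_proj :: "complex \<Rightarrow> real \<Rightarrow> complex^'n^'n \<Rightarrow> complex^'n^'n" where
  "riesz_proj c r M = (\<chi> j k. (1 / (2 * pi * \<i>)) *
      contour_integral (circlepath c r) (\<lambda>z. matrix_inv (mat z - M) $ j $ k))"

end

(*
  Write R(z) = (z - Lambda_alpha - E)^-1 and R0(z) = (z - Lambda_alpha)^-1.  The second
  resolvent identity R = R0 + R0 E R gives P1(E) = P1(0) + D with |D| = O(b).  Since
  Lambda_alpha Z = 0 = Z Lambda_alpha, we have R0(z) Z = Z R0(z) = Z/z, and 1/z integrates to 0
  over Gamma1 because 0 lies outside Gamma1; hence P1(0) Z = Z P1(0) = 0, so that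
  P1 Z P0 = D Z P0 = O(b^2) and P1 Z P1 = D Z D = O(b^3) by submultiplicativity of the Frobenius
  norm.  The constants only depend on a lower bound for the distance from the spectrum of
  Lambda_alpha to both circles, which persists for alpha near alpha+.
*)

theory Submission
  imports Defs
begin

no_notation fps_nth (infixl \<open>$\<close> 75)

subsection \<open>Frobenius norm\<close>

lemma norm_matrix_nth_le: "norm (A $ i $ j) \<le> norm (A :: 'a::real_normed_vector^'n^'m)"
  using Finite_Cartesian_Product.norm_nth_le[of "A $ i" j] Finite_Cartesian_Product.norm_nth_le[of A i]
  by linarith

lemma norm_matrix_le_entrywise:
  fixes A :: "'a::real_normed_vector^'n^'m"
  assumes "\<And>i j. norm (A $ i $ j) \<le> c"
  shows "norm A \<le> real CARD('m) * real CARD('n) * c"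
proof -
  have row: "norm (A $ i) \<le> real CARD('n) * c" for i
  proof -
    have "norm (A $ i) \<le> (\<Sum>j\<in>UNIV. norm (A $ i $ j))"
      by (simp add: norm_vec_def L2_set_le_sum)
    also have "\<dots> \<le> (\<Sum>j\<in>(UNIV::'n set). c)"
      by (rule sum_mono) (rule assms)
    finally show ?thesis by simp
  qed
  have "norm A \<le> (\<Sum>i\<in>UNIV. norm (A $ i))"
    by (simp add: norm_vec_def L2_set_le_sum)
  also have "\<dots> \<le> (\<Sum>i\<in>(UNIV::'m set). real CARD('n) * c)"
    by (rule sum_mono) (rule row)
  finally show ?thesis by simp
qed

lemma norm_matrix_vector_mult_le:
  fixes A :: "'a::real_normed_field^'n^'m"
  shows "norm (A *v x) \<le> norm A * norm x"
proof -
  have row: "norm ((A *v x) $ i) \<le> norm (A $ i) * norm x" for i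
  proof -
    have "norm ((A *v x) $ i) \<le> (\<Sum>k\<in>UNIV. norm (A $ i $ k) * norm (x $ k))"
      unfolding matrix_vector_mult_def by (simp add: norm_mult order_trans[OF norm_sum])
    also have "\<dots> \<le> norm (A $ i) * norm x"
      using L2_set_mult_ineq[of "\<lambda>k. norm (A $ i $ k)" "\<lambda>k. norm (x $ k)" UNIV]
      by (simp add: norm_vec_def)
    finally show ?thesis .
  qed
  have "norm (A *v x) \<le> L2_set (\<lambda>i. norm (A $ i) * norm x) UNIV"
    unfolding norm_vec_def[of "A *v x"] by (rule L2_set_mono) (use row in auto)
  also have "\<dots> = norm A * norm x"
    by (simp add: norm_vec_def[of A] L2_set_right_distrib[symmetric] mult.commute)
  finally show ?thesis .
qed

lemma norm_transpose: "norm (transpose (A :: 'a::real_normed_vector^'n^'m)) = norm A"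
proof -
  have "(\<Sum>i\<in>UNIV. \<Sum>j\<in>UNIV. (norm (A $ j $ i))\<^sup>2) = (\<Sum>j\<in>UNIV. \<Sum>i\<in>UNIV. (norm (A $ j $ i))\<^sup>2)"
    by (rule sum.swap)
  then show ?thesis
    unfolding norm_vec_def L2_set_def transpose_def by (simp add: sum_nonneg)
qed

lemma norm_matrix_mult_le:
  fixes A :: "'a::real_normed_field^'n^'m" and B :: "'a^'p^'n"
  shows "norm (A ** B) \<le> norm A * norm B"
proof -
  have "(A ** B) $ i = transpose B *v A $ i" for i
    by (simp add: vec_eq_iff matrix_matrix_mult_def matrix_vector_mult_def transpose_def mult.commute)
  then have "norm ((A ** B) $ i) \<le> norm (A $ i) * norm B" for i
    using norm_matrix_vector_mult_le[of "transpose B" "A $ i"] by (simp add: norm_transpose mult.commute)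
  then have "norm (A ** B) \<le> L2_set (\<lambda>i. norm (A $ i) * norm B) UNIV"
    unfolding norm_vec_def[of "A ** B"] by (intro L2_set_mono) auto
  also have "\<dots> = norm A * norm B"
    by (simp add: norm_vec_def[of A] L2_set_right_distrib[symmetric] mult.commute)
  finally show ?thesis .
qed

lemma norm_matrix_mult3_le:
  fixes A :: "'a::real_normed_field^'n^'m" and B :: "'a^'p^'n" and C :: "'a^'q^'p"
  shows "norm (A ** B ** C) \<le> norm A * norm B * norm C"
  by (meson mult_right_mono norm_ge_zero norm_matrix_mult_le order_trans)

lemma mat_mult_nth: "(mat k ** A) $ i $ j = k * A $ i $ j"
  by (simp add: matrix_matrix_mult_def mat_def if_distrib if_distribR sum.delta cong: if_cong)

lemma mat_mult_commute: "A ** mat k = mat k ** (A :: 'a::comm_semiring_1^'n^'m)"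
  by (simp add: vec_eq_iff mat_mult_nth matrix_matrix_mult_def mat_def if_distrib if_distribR
      sum.delta' mult.commute cong: if_cong)

lemma mat_mult_mat: "mat a ** mat b = (mat (a * b) :: 'a::semiring_1^'n^'n)"
  unfolding vec_eq_iff mat_mult_nth by (simp add: mat_def)

lemma norm_mat_mult: "norm (mat k ** A) = norm k * norm (A :: 'a::real_normed_field^'n^'m)"
  by (simp add: norm_vec_def mat_mult_nth norm_mult L2_set_right_distrib)

lemma matrix_add_rdistrib: "(A + B) ** C = A ** C + B ** (C :: 'a::semiring_1^'p^'n)"
  by (simp add: vec_eq_iff matrix_matrix_mult_def distrib_right sum.distrib)

lemma matrix_diff_ldistrib: "A ** (B - C) = A ** B - A ** (C :: 'a::ring_1^'p^'n)"
  by (simp add: vec_eq_iff matrix_matrix_mult_def right_diff_distrib sum_subtractf)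

lemma matrix_diff_rdistrib: "(A - B) ** C = A ** C - B ** (C :: 'a::ring_1^'p^'n)"
  by (simp add: vec_eq_iff matrix_matrix_mult_def left_diff_distrib sum_subtractf)

lemma diag_mat_mult_nth: "(diag_mat \<alpha> ** A) $ i $ j = of_real (\<alpha> $ i) * A $ i $ j"
  by (simp add: matrix_matrix_mult_def diag_mat_def if_distrib if_distribR sum.delta cong: if_cong)

lemma conj_transpose_mult: "conj_transpose (A ** B) = conj_transpose B ** conj_transpose A"
  by (simp add: vec_eq_iff conj_transpose_def matrix_matrix_mult_def mult.commute)

lemma hermitian_diag_mat: "hermitian (diag_mat \<alpha>)"
  by (simp add: hermitian_def conj_transpose_def diag_mat_def vec_eq_iff)

lemma hermitian_mult_eq_0_commute:
  assumes "hermitian A" "hermitian B" "A ** B = 0"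
  shows "B ** A = 0"
proof -
  have "B ** A = conj_transpose (A ** B)"
    using assms(1,2) by (simp add: conj_transpose_mult hermitian_def)
  then show ?thesis
    using assms(3) by (simp add: conj_transpose_def vec_eq_iff)
qed

subsection \<open>Inverses and resolvents\<close>

lemma matrix_inv_right: "invertible A \<Longrightarrow> A ** matrix_inv A = mat 1"
  and matrix_inv_left: "invertible A \<Longrightarrow> matrix_inv A ** A = mat 1"
  unfolding invertible_def matrix_inv_def by (metis (mono_tags, lifting) someI_ex)+

lemma matrix_inv_unique:
  fixes A B :: "'a::field^'n^'n"
  assumes "A ** B = mat 1"
  shows "invertible A" and "matrix_inv A = B"
proof -
  show inv: "invertible A"
    using assms invertible_right_inverse by blast
  have "matrix_inv A = matrix_inv A ** (A ** B)"
    by (simp add: assms)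
  also have "\<dots> = B"
    by (simp add: matrix_mul_assoc matrix_inv_left[OF inv])
  finally show "matrix_inv A = B" .
qed

lemma invertible_diff_small:
  fixes A E :: "'a::real_normed_field^'n^'n"
  assumes inv: "invertible A" and small: "norm (matrix_inv A) * norm E \<le> 1/2"
  shows "invertible (A - E)"
    and "matrix_inv (A - E) = matrix_inv A + matrix_inv A ** E ** matrix_inv (A - E)"
    and "norm (matrix_inv (A - E)) \<le> 2 * norm (matrix_inv A)"
proof -
  define R0 where "R0 = matrix_inv A"
  have contraction: "norm (R0 ** E) \<le> 1/2"
    using norm_matrix_mult_le[of R0 E] small unfolding R0_def by linarith
  have "v = 0" if "(A - E) *v v = 0" for v
  proof -
    have "v = R0 *v (A *v v)"
      by (simp add: R0_def matrix_vector_mul_assoc matrix_inv_left[OF inv])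
    also have "A *v v = E *v v"
      using that by (simp add: matrix_vector_mult_diff_rdistrib)
    finally have "v = (R0 ** E) *v v"
      by (simp add: matrix_vector_mul_assoc)
    then have "norm v \<le> norm (R0 ** E) * norm v"
      by (metis norm_matrix_vector_mult_le)
    also have "\<dots> \<le> 1/2 * norm v"
      using contraction by (intro mult_right_mono) auto
    finally show "v = 0" by simp
  qed
  then have "inj ((*v) (A - E))"
    by (metis (no_types, lifting) injI eq_iff_diff_eq_0 matrix_vector_mult_diff_distrib)
  then show inv': "invertible (A - E)"
    using invertible_left_inverse matrix_left_invertible_injective by blast
  define R where "R = matrix_inv (A - E)"
  have "R = R0 ** (A ** R)"
    by (simp add: R0_def matrix_mul_assoc matrix_inv_left[OF inv])
  also have "A ** R = mat 1 + E ** R"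
    using matrix_inv_right[OF inv'] by (simp add: R_def matrix_diff_rdistrib algebra_simps)
  finally show identity: "matrix_inv (A - E) = matrix_inv A + matrix_inv A ** E ** matrix_inv (A - E)"
    by (simp add: R_def R0_def matrix_add_ldistrib matrix_mul_assoc)
  have "norm R \<le> norm R0 + norm (R0 ** E ** R)"
    by (metis R_def R0_def identity norm_triangle_ineq)
  also have "norm (R0 ** E ** R) \<le> 1/2 * norm R"
    using norm_matrix_mult_le[of "R0 ** E" R] contraction by (meson mult_right_mono norm_ge_zero order_trans)
  finally show "norm (matrix_inv (A - E)) \<le> 2 * norm (matrix_inv A)"
    by (simp add: R_def R0_def)
qed

lemma resolvent_identity:
  assumes "invertible (mat z - M)" "invertible (mat w - M)"
  shows "matrix_inv (mat z - M) - matrix_inv (mat w - M)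
           = mat (w - z) ** (matrix_inv (mat z - M) ** matrix_inv (mat w - (M :: 'a::field^'n^'n)))"
proof -
  define Rz Rw where "Rz = matrix_inv (mat z - M)" and "Rw = matrix_inv (mat w - M)"
  have "mat (w - z) = (mat w - M) - (mat z - M)"
    by (simp add: vec_eq_iff mat_def)
  then have "Rz ** mat (w - z) ** Rw = Rz ** ((mat w - M) ** Rw) - (Rz ** (mat z - M)) ** Rw"
    by (simp add: matrix_diff_ldistrib matrix_diff_rdistrib matrix_mul_assoc)
  also have "\<dots> = Rz - Rw"
    using assms by (simp add: Rz_def Rw_def matrix_inv_left matrix_inv_right)
  finally show ?thesis
    by (simp add: Rz_def Rw_def mat_mult_commute matrix_mul_assoc)
qed

lemma continuous_on_resolvent:
  fixes M :: "'a::real_normed_field^'n^'n"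
  assumes "\<And>z. z \<in> S \<Longrightarrow> invertible (mat z - M)"
    and "\<And>z. z \<in> S \<Longrightarrow> norm (matrix_inv (mat z - M)) \<le> B"
  shows "continuous_on S (\<lambda>z. matrix_inv (mat z - M))"
proof (rule lipschitz_on_continuous_on, rule lipschitz_onI)
  fix z w assume "z \<in> S" "w \<in> S"
  then have "dist (matrix_inv (mat z - M)) (matrix_inv (mat w - M))
               = norm (w - z) * norm (matrix_inv (mat z - M) ** matrix_inv (mat w - M))"
    using assms(1) by (simp add: dist_norm resolvent_identity norm_mat_mult)
  also have "\<dots> \<le> norm (w - z) * (B * B)"
    using \<open>z \<in> S\<close> \<open>w \<in> S\<close> assms(2) norm_matrix_mult_le
    by (meson mult_left_mono mult_mono norm_ge_zero order_trans)
  finally show "dist (matrix_inv (mat z - M)) (matrix_inv (mat w - M)) \<le> B\<^sup>2 * dist z w"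
    by (simp add: dist_norm norm_minus_commute power2_eq_square mult.commute)
qed simp

lemma resolvent_mult_annihilated:
  fixes M Z :: "'a::field^'n^'n"
  assumes inv: "invertible (mat z - M)" and "z \<noteq> 0"
  shows "M ** Z = 0 \<Longrightarrow> matrix_inv (mat z - M) ** Z = mat (1/z) ** Z"
    and "Z ** M = 0 \<Longrightarrow> Z ** matrix_inv (mat z - M) = mat (1/z) ** Z"
proof -
  define R where "R = matrix_inv (mat z - M)"
  have cancel: "mat (1/z) ** (mat z ** X) = X" for X :: "'a^'n^'n"
    using \<open>z \<noteq> 0\<close> by (simp add: matrix_mul_assoc mat_mult_mat)
  show "matrix_inv (mat z - M) ** Z = mat (1/z) ** Z" if "M ** Z = 0"
  proof -
    have "Z = R ** ((mat z - M) ** Z)"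
      by (simp add: R_def matrix_mul_assoc matrix_inv_left[OF inv])
    also have "\<dots> = mat z ** (R ** Z)"
      using that by (simp add: matrix_diff_rdistrib matrix_mul_assoc mat_mult_commute)
    finally show ?thesis
      using cancel by (metis R_def)
  qed
  show "Z ** matrix_inv (mat z - M) = mat (1/z) ** Z" if "Z ** M = 0"
  proof -
    have "Z = (Z ** (mat z - M)) ** R"
      by (simp add: R_def matrix_mul_assoc[symmetric] matrix_inv_right[OF inv])
    also have "\<dots> = mat z ** (Z ** R)"
      using that by (simp add: matrix_diff_ldistrib matrix_mul_assoc mat_mult_commute)
    finally show ?thesis
      using cancel by (metis R_def)
  qed
qed

subsection \<open>Matrix-valued contour integrals\<close>

definition matrix_contour_integral ::
    "(real \<Rightarrow> complex) \<Rightarrow> (complex \<Rightarrow> complex^'n^'m) \<Rightarrow> complex^'n^'m" where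
  "matrix_contour_integral \<gamma> F = (\<chi> j k. contour_integral \<gamma> (\<lambda>z. F z $ j $ k))"

lemma riesz_proj_eq:
  "riesz_proj c r M
     = mat (1 / (2 * pi * \<i>)) ** matrix_contour_integral (circlepath c r) (\<lambda>z. matrix_inv (mat z - M))"
  by (simp add: riesz_proj_def matrix_contour_integral_def vec_eq_iff mat_mult_nth)

lemma continuous_on_matrix_mult:
  fixes F :: "'a::topological_space \<Rightarrow> 'b::real_normed_field^'n^'m" and G :: "'a \<Rightarrow> 'b^'p^'n"
  assumes "continuous_on S F" "continuous_on S G"
  shows "continuous_on S (\<lambda>z. F z ** G z)"
  unfolding matrix_matrix_mult_def
  by (intro continuous_on_vec_lambda continuous_on_sum continuous_on_mult continuous_on_component assms)

lemma contour_integrable_matrix_nth: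
  assumes "0 \<le> r" "continuous_on (sphere c r) F"
  shows "(\<lambda>z. F z $ j $ k) contour_integrable_on circlepath c r"
  using assms by (intro contour_integrable_continuous_circlepath continuous_on_component) simp

lemma matrix_contour_integral_mult_right:
  assumes "0 \<le> r" "continuous_on (sphere c r) F"
  shows "matrix_contour_integral (circlepath c r) (\<lambda>z. F z ** X)
           = matrix_contour_integral (circlepath c r) F ** X"
  using contour_integrable_matrix_nth[OF assms]
  by (simp add: matrix_contour_integral_def vec_eq_iff matrix_matrix_mult_def contour_integral_sum
      contour_integrable_rmul contour_integral_rmul)

lemma matrix_contour_integral_mult_left:
  assumes "0 \<le> r" "continuous_on (sphere c r) F"
  shows "matrix_contour_integral (circlepath c r) (\<lambda>z. X ** F z)
           = X ** matrix_contour_integral (circlepath c r) F"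
  using contour_integrable_matrix_nth[OF assms]
  by (simp add: matrix_contour_integral_def vec_eq_iff matrix_matrix_mult_def contour_integral_sum
      contour_integrable_lmul contour_integral_lmul)

lemma matrix_contour_integral_diff:
  assumes "0 \<le> r" "continuous_on (sphere c r) F" "continuous_on (sphere c r) G"
  shows "matrix_contour_integral (circlepath c r) (\<lambda>z. F z - G z)
           = matrix_contour_integral (circlepath c r) F - matrix_contour_integral (circlepath c r) G"
  using contour_integrable_matrix_nth[OF assms(1,2)] contour_integrable_matrix_nth[OF assms(1,3)]
  by (simp add: matrix_contour_integral_def vec_eq_iff contour_integral_diff)

lemma matrix_contour_integral_cong:
  "(\<And>z. z \<in> path_image \<gamma> \<Longrightarrow> F z = G z) \<Longrightarrow> matrix_contour_integral \<gamma> F = matrix_contour_integral \<gamma> G"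
  by (auto simp: matrix_contour_integral_def vec_eq_iff intro!: contour_integral_eq)

lemma matrix_contour_integral_mat_mult:
  assumes "f contour_integrable_on \<gamma>"
  shows "matrix_contour_integral \<gamma> (\<lambda>z. mat (f z) ** A) = mat (contour_integral \<gamma> f) ** A"
  using assms by (simp add: matrix_contour_integral_def vec_eq_iff mat_mult_nth contour_integral_rmul)

lemma norm_matrix_contour_integral_le:
  fixes F :: "complex \<Rightarrow> complex^'n^'m"
  assumes "0 < r" "continuous_on (sphere c r) F" "0 \<le> B" "\<And>z. z \<in> sphere c r \<Longrightarrow> norm (F z) \<le> B"
  shows "norm (matrix_contour_integral (circlepath c r) F)
           \<le> real CARD('m) * real CARD('n) * (B * (2 * pi * r))"
proof (rule norm_matrix_le_entrywise)
  fix j k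
  have "((\<lambda>z. F z $ j $ k) has_contour_integral matrix_contour_integral (circlepath c r) F $ j $ k)
          (circlepath c r)"
    using contour_integrable_matrix_nth[of r c F j k] assms(1,2)
    by (simp add: matrix_contour_integral_def has_contour_integral_integral)
  then show "norm (matrix_contour_integral (circlepath c r) F $ j $ k) \<le> B * (2 * pi * r)"
  proof (rule has_contour_integral_bound_circlepath)
    fix z assume "norm (z - c) = r"
    then have "z \<in> sphere c r"
      by (simp add: dist_norm norm_minus_commute)
    then show "norm (F z $ j $ k) \<le> B"
      using norm_matrix_nth_le[of "F z" j k] assms(4) by fastforce
  qed (use assms(1,3) in auto)
qed

lemma norm_riesz_integral_le:
  fixes F :: "complex \<Rightarrow> complex^'n^'n"
  assumes "0 < r" "continuous_on (sphere c r) F" "0 \<le> B" "\<And>z. z \<in> sphere c r \<Longrightarrow> norm (F z) \<le> B"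
  shows "norm (mat (1 / (2 * pi * \<i>)) ** matrix_contour_integral (circlepath c r) F)
           \<le> real CARD('n)^2 * B * r"
proof -
  have "norm (mat (1 / (2 * pi * \<i>)) ** matrix_contour_integral (circlepath c r) F)
          = norm (matrix_contour_integral (circlepath c r) F) / (2 * pi)"
    by (simp add: norm_mat_mult norm_divide norm_mult)
  also have "\<dots> \<le> real CARD('n) * real CARD('n) * (B * (2 * pi * r)) / (2 * pi)"
    by (rule divide_right_mono) (use norm_matrix_contour_integral_le[OF assms] in auto)
  also have "\<dots> = real CARD('n)^2 * B * r"
    by (simp add: power2_eq_square)
  finally show ?thesis .
qed

lemma has_contour_integral_inverse_circlepath_outside:
  assumes "0 < r" "r < cmod c"
  shows "((\<lambda>z. 1 / z) has_contour_integral 0) (circlepath c r)"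
proof (rule Cauchy_theorem_disc_simple)
  show "(\<lambda>z. 1 / z) holomorphic_on ball c (cmod c)"
    by (intro holomorphic_intros) (auto simp: dist_norm)
  show "path_image (circlepath c r) \<subseteq> ball c (cmod c)"
    using assms by auto
qed simp_all

subsection \<open>Riesz projections of a perturbed diagonal matrix\<close>

locale spectral_circle =
  fixes \<alpha> :: "real^'n::finite" and c :: complex and r d :: real
  assumes radius_pos: "0 < r" and gap_pos: "0 < d"
    and gap: "\<And>z i. z \<in> sphere c r \<Longrightarrow> d \<le> cmod (z - of_real (\<alpha> $ i))"
begin

lemma diag_resolvent:
  assumes "z \<in> sphere c r"
  shows "invertible (mat z - diag_mat \<alpha>)"
    and "norm (matrix_inv (mat z - diag_mat \<alpha>)) \<le> real CARD('n)^2 / d"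
proof -
  define D :: "complex^'n^'n" where "D = (\<chi> i j. if i = j then 1 / (z - of_real (\<alpha> $ i)) else 0)"
  have dist_ge: "d \<le> cmod (z - of_real (\<alpha> $ i))" for i
    using gap[OF assms] .
  have "(z - of_real (\<alpha> $ i)) * D $ i $ j = mat 1 $ i $ j" for i j
    using dist_ge[of i] gap_pos by (auto simp: D_def mat_def)
  then have "(mat z - diag_mat \<alpha>) ** D = mat 1"
    by (simp add: vec_eq_iff matrix_diff_rdistrib mat_mult_nth diag_mat_mult_nth left_diff_distrib)
  note inverse = matrix_inv_unique[OF this]
  show "invertible (mat z - diag_mat \<alpha>)"
    by (fact inverse(1))
  have "norm (D $ i $ j) \<le> 1 / d" for i j
    using dist_ge[of i] gap_pos by (auto simp: D_def norm_divide intro: frac_le)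
  then have "norm D \<le> real CARD('n) * real CARD('n) * (1 / d)"
    by (rule norm_matrix_le_entrywise)
  then show "norm (matrix_inv (mat z - diag_mat \<alpha>)) \<le> real CARD('n)^2 / d"
    by (simp add: inverse(2) power2_eq_square)
qed

lemma perturbed_resolvent:
  assumes E: "norm E \<le> b" and small: "2 * real CARD('n)^2 * b \<le> d" and z: "z \<in> sphere c r"
  shows "invertible (mat z - (diag_mat \<alpha> + E))"
    and "matrix_inv (mat z - (diag_mat \<alpha> + E))
           = matrix_inv (mat z - diag_mat \<alpha>)
             + matrix_inv (mat z - diag_mat \<alpha>) ** E ** matrix_inv (mat z - (diag_mat \<alpha> + E))"
    and "norm (matrix_inv (mat z - (diag_mat \<alpha> + E))) \<le> 2 * real CARD('n)^2 / d"
proof -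
  have "norm (matrix_inv (mat z - diag_mat \<alpha>)) * norm E \<le> real CARD('n)^2 / d * b"
    using diag_resolvent(2)[OF z] E gap_pos by (intro mult_mono) auto
  also have "\<dots> \<le> 1/2"
    using small gap_pos by (simp add: field_simps)
  finally have "norm (matrix_inv (mat z - diag_mat \<alpha>)) * norm E \<le> 1/2" .
  note perturbation = invertible_diff_small[OF diag_resolvent(1)[OF z] this, unfolded diff_diff_eq]
  then show "invertible (mat z - (diag_mat \<alpha> + E))"
    and "matrix_inv (mat z - (diag_mat \<alpha> + E))
           = matrix_inv (mat z - diag_mat \<alpha>)
             + matrix_inv (mat z - diag_mat \<alpha>) ** E ** matrix_inv (mat z - (diag_mat \<alpha> + E))"
    and "norm (matrix_inv (mat z - (diag_mat \<alpha> + E))) \<le> 2 * real CARD('n)^2 / d"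
    using diag_resolvent(2)[OF z] by auto
qed

lemma continuous_on_diag_resolvent:
  "continuous_on (sphere c r) (\<lambda>z. matrix_inv (mat z - diag_mat \<alpha>))"
  by (rule continuous_on_resolvent[where B = "real CARD('n)^2 / d"])
    (erule diag_resolvent(1), erule diag_resolvent(2))

lemma continuous_on_perturbed_resolvent:
  assumes "norm E \<le> b" "2 * real CARD('n)^2 * b \<le> d"
  shows "continuous_on (sphere c r) (\<lambda>z. matrix_inv (mat z - (diag_mat \<alpha> + E)))"
  by (rule continuous_on_resolvent[where B = "2 * real CARD('n)^2 / d"])
    (erule perturbed_resolvent(1)[OF assms], erule perturbed_resolvent(3)[OF assms])

lemma norm_riesz_proj_le:
  assumes "norm E \<le> b" "2 * real CARD('n)^2 * b \<le> d"
  shows "norm (riesz_proj c r (diag_mat \<alpha> + E)) \<le> 2 * real CARD('n)^4 * r / d"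
proof -
  have "norm (riesz_proj c r (diag_mat \<alpha> + E)) \<le> real CARD('n)^2 * (2 * real CARD('n)^2 / d) * r"
    unfolding riesz_proj_eq
    using radius_pos continuous_on_perturbed_resolvent[OF assms] perturbed_resolvent(3)[OF assms] gap_pos
    by (intro norm_riesz_integral_le) auto
  also have "\<dots> = 2 * real CARD('n)^4 * r / d"
    by (simp add: power4_eq_xxxx power2_eq_square)
  finally show ?thesis .
qed

lemma norm_riesz_proj_diff_le:
  assumes E: "norm E \<le> b" and small: "2 * real CARD('n)^2 * b \<le> d"
  shows "norm (riesz_proj c r (diag_mat \<alpha> + E) - riesz_proj c r (diag_mat \<alpha>))
           \<le> 2 * real CARD('n)^6 * r / d^2 * b"
proof -
  define R0 R where "R0 z = matrix_inv (mat z - diag_mat \<alpha>)"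
    and "R z = matrix_inv (mat z - (diag_mat \<alpha> + E))" for z
  have b_nonneg: "0 \<le> b"
    using norm_ge_zero[of E] E by linarith
  have cont_R0: "continuous_on (sphere c r) R0" and cont_R: "continuous_on (sphere c r) R"
    using continuous_on_diag_resolvent continuous_on_perturbed_resolvent[OF E small]
    by (simp_all add: R0_def[abs_def] R_def[abs_def])
  have identity: "R z - R0 z = R0 z ** E ** R z" if "z \<in> sphere c r" for z
    using perturbed_resolvent(2)[OF E small that] unfolding R0_def R_def by (metis add_diff_cancel_left')
  have "riesz_proj c r (diag_mat \<alpha> + E) - riesz_proj c r (diag_mat \<alpha>)
          = mat (1 / (2 * pi * \<i>)) **
              (matrix_contour_integral (circlepath c r) R - matrix_contour_integral (circlepath c r) R0)"
    by (simp add: riesz_proj_eq R0_def[abs_def] R_def[abs_def] matrix_diff_ldistrib)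
  also have "matrix_contour_integral (circlepath c r) R - matrix_contour_integral (circlepath c r) R0
               = matrix_contour_integral (circlepath c r) (\<lambda>z. R z - R0 z)"
    using radius_pos cont_R cont_R0 by (simp add: matrix_contour_integral_diff)
  also have "\<dots> = matrix_contour_integral (circlepath c r) (\<lambda>z. R0 z ** E ** R z)"
    using radius_pos identity by (intro matrix_contour_integral_cong) simp
  also have "norm (mat (1 / (2 * pi * \<i>)) ** \<dots>)
               \<le> real CARD('n)^2 * (real CARD('n)^2 / d * b * (2 * real CARD('n)^2 / d)) * r"
  proof (rule norm_riesz_integral_le)
    show "continuous_on (sphere c r) (\<lambda>z. R0 z ** E ** R z)"
      using cont_R0 cont_R by (intro continuous_on_matrix_mult continuous_on_const)
    show "norm (R0 z ** E ** R z) \<le> real CARD('n)^2 / d * b * (2 * real CARD('n)^2 / d)"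
      if "z \<in> sphere c r" for z
    proof -
      have "norm (R0 z ** E ** R z) \<le> norm (R0 z) * norm E * norm (R z)"
        by (rule norm_matrix_mult3_le)
      also have "\<dots> \<le> real CARD('n)^2 / d * b * (2 * real CARD('n)^2 / d)"
        using diag_resolvent(2)[OF that] perturbed_resolvent(3)[OF E small that] E gap_pos b_nonneg
        unfolding R0_def R_def by (intro mult_mono) auto
      finally show ?thesis .
    qed
  qed (use radius_pos gap_pos b_nonneg in simp_all)
  also have "\<dots> = 2 * real CARD('n)^6 * r / d^2 * b"
  proof -
    have "real CARD('n)^6 = real CARD('n)^2 * real CARD('n)^2 * real CARD('n)^2"
      by (simp flip: power_add)
    then show ?thesis
      by (simp add: power2_eq_square)
  qed
  finally show ?thesis .
qed

text \<open>Here \<open>r < cmod c\<close> puts \<open>0\<close> outside the circle: on the kernel of \<open>diag_mat \<alpha>\<close> the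
  resolvent is \<open>1/z\<close>, whose integral then vanishes.\<close>

lemma riesz_proj_annihilated:
  assumes "r < cmod c"
  shows "diag_mat \<alpha> ** Z = 0 \<Longrightarrow> riesz_proj c r (diag_mat \<alpha>) ** Z = 0"
    and "Z ** diag_mat \<alpha> = 0 \<Longrightarrow> Z ** riesz_proj c r (diag_mat \<alpha>) = 0"
proof -
  define R0 where "R0 z = matrix_inv (mat z - diag_mat \<alpha>)" for z
  have cont_R0: "continuous_on (sphere c r) R0"
    using continuous_on_diag_resolvent by (simp add: R0_def[abs_def])
  have nonzero: "z \<noteq> 0" if "z \<in> sphere c r" for z
    using that assms by (cases "z = 0") (simp_all add: dist_norm)
  have inverse: "(\<lambda>z. 1 / z) contour_integrable_on circlepath c r"
    "contour_integral (circlepath c r) (\<lambda>z. 1 / z) = 0"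
    using has_contour_integral_inverse_circlepath_outside[OF radius_pos assms]
    by (auto simp: contour_integrable_on_def contour_integral_unique)
  have vanish: "matrix_contour_integral (circlepath c r) (\<lambda>z. mat (1 / z) ** Z) = 0"
    by (simp add: matrix_contour_integral_mat_mult[OF inverse(1)] inverse(2))
  show "riesz_proj c r (diag_mat \<alpha>) ** Z = 0" if "diag_mat \<alpha> ** Z = 0"
  proof -
    have "riesz_proj c r (diag_mat \<alpha>) ** Z
            = mat (1 / (2 * pi * \<i>)) ** (matrix_contour_integral (circlepath c r) R0 ** Z)"
      by (simp add: riesz_proj_eq R0_def[abs_def] matrix_mul_assoc)
    also have "matrix_contour_integral (circlepath c r) R0 ** Z
                 = matrix_contour_integral (circlepath c r) (\<lambda>z. R0 z ** Z)"
      using radius_pos cont_R0 by (simp add: matrix_contour_integral_mult_right)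
    also have "\<dots> = 0"
      using radius_pos diag_resolvent(1) nonzero resolvent_mult_annihilated(1)[OF _ _ that] vanish
      by (subst matrix_contour_integral_cong[where G = "\<lambda>z. mat (1 / z) ** Z"]) (simp_all add: R0_def)
    finally show ?thesis
      by simp
  qed
  show "Z ** riesz_proj c r (diag_mat \<alpha>) = 0" if "Z ** diag_mat \<alpha> = 0"
  proof -
    have "Z ** riesz_proj c r (diag_mat \<alpha>)
            = mat (1 / (2 * pi * \<i>)) ** (Z ** matrix_contour_integral (circlepath c r) R0)"
      by (simp add: riesz_proj_eq R0_def[abs_def] matrix_mul_assoc mat_mult_commute)
    also have "Z ** matrix_contour_integral (circlepath c r) R0
                 = matrix_contour_integral (circlepath c r) (\<lambda>z. Z ** R0 z)"
      using radius_pos cont_R0 by (simp add: matrix_contour_integral_mult_left)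
    also have "\<dots> = 0"
      using radius_pos diag_resolvent(1) nonzero resolvent_mult_annihilated(2)[OF _ _ that] vanish
      by (subst matrix_contour_integral_cong[where G = "\<lambda>z. mat (1 / z) ** Z"]) (simp_all add: R0_def)
    finally show ?thesis
      by simp
  qed
qed

lemma norm_riesz_proj_kernel_le:
  assumes "r < cmod c" and E: "norm E \<le> b" and small: "2 * real CARD('n)^2 * b \<le> d"
    and "diag_mat \<alpha> ** Z = 0" "Z ** diag_mat \<alpha> = 0"
  defines "K \<equiv> 2 * real CARD('n)^6 * r / d^2"
  shows "norm (riesz_proj c r (diag_mat \<alpha> + E) ** Z ** X) \<le> K * b * norm Z * norm X"
    and "norm (riesz_proj c r (diag_mat \<alpha> + E) ** Z ** riesz_proj c r (diag_mat \<alpha> + E))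
           \<le> (K * b)\<^sup>2 * norm Z"
proof -
  define P D where "P = riesz_proj c r (diag_mat \<alpha> + E)" and "D = P - riesz_proj c r (diag_mat \<alpha>)"
  have norm_D: "norm D \<le> K * b"
    using norm_riesz_proj_diff_le[OF E small] by (simp add: D_def P_def K_def)
  then have Kb_nonneg: "0 \<le> K * b"
    using norm_ge_zero[of D] by linarith
  have "P ** Z = riesz_proj c r (diag_mat \<alpha>) ** Z + D ** Z"
    by (simp add: D_def flip: matrix_add_rdistrib)
  then have PZ: "P ** Z = D ** Z"
    using riesz_proj_annihilated(1)[OF assms(1,4)] by simp
  have "Z ** P = Z ** riesz_proj c r (diag_mat \<alpha>) + Z ** D"
    by (simp add: D_def flip: matrix_add_ldistrib)
  then have ZP: "Z ** P = Z ** D"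
    using riesz_proj_annihilated(2)[OF assms(1,5)] by simp
  have "norm (P ** Z ** X) \<le> norm D * norm Z * norm X"
    using norm_matrix_mult3_le[of D Z X] by (simp add: PZ)
  also have "\<dots> \<le> K * b * norm Z * norm X"
    using norm_D by (intro mult_right_mono) auto
  finally show "norm (riesz_proj c r (diag_mat \<alpha> + E) ** Z ** X) \<le> K * b * norm Z * norm X"
    by (simp add: P_def)
  have "norm (P ** Z ** P) \<le> norm D * norm Z * norm D"
    using norm_matrix_mult3_le[of D Z D] by (simp add: PZ ZP flip: matrix_mul_assoc)
  also have "\<dots> \<le> K * b * norm Z * (K * b)"
    using norm_D Kb_nonneg by (intro mult_mono) auto
  also have "\<dots> = (K * b)\<^sup>2 * norm Z"
    by (simp add: power2_eq_square)
  finally show "norm (riesz_proj c r (diag_mat \<alpha> + E) ** Z ** riesz_proj c r (diag_mat \<alpha> + E))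
      \<le> (K * b)\<^sup>2 * norm Z"
    by (simp add: P_def)
qed

end

lemma spectral_circle_exists:
  assumes "0 < r" and "\<And>i. of_real (\<alpha> $ i) \<notin> sphere c r"
  obtains d where "spectral_circle \<alpha> c r d"
proof -
  have "closed (range (\<lambda>i. complex_of_real (\<alpha> $ i)))"
    by (simp add: finite_imp_closed)
  moreover have "sphere c r \<inter> range (\<lambda>i. complex_of_real (\<alpha> $ i)) = {}"
    using assms(2) by blast
  ultimately obtain d where
    "0 < d" "\<forall>z\<in>sphere c r. \<forall>w\<in>range (\<lambda>i. complex_of_real (\<alpha> $ i)). d \<le> dist z w"
    using separate_compact_closed[OF compact_sphere] by blast
  then have "spectral_circle \<alpha> c r d"
    using assms(1) by unfold_locales (auto simp: dist_norm)
  then show ?thesis ..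
qed

lemma spectral_circle_perturb:
  assumes "spectral_circle \<alpha>0 c r d" and "0 < e" and "dist \<alpha> \<alpha>0 \<le> d - e"
  shows "spectral_circle \<alpha> c r e"
proof
  interpret spectral_circle \<alpha>0 c r d by fact
  show "0 < r" "0 < e"
    by (fact radius_pos) (fact assms(2))
  fix z i assume "z \<in> sphere c r"
  have "cmod (of_real (\<alpha> $ i) - of_real (\<alpha>0 $ i)) \<le> d - e"
    using dist_vec_nth_le[where x = \<alpha> and y = \<alpha>0 and i = i] assms(3)
    by (simp add: dist_real_def flip: of_real_diff)
  moreover have "cmod (z - of_real (\<alpha>0 $ i))
                   \<le> cmod (z - of_real (\<alpha> $ i)) + cmod (of_real (\<alpha> $ i) - of_real (\<alpha>0 $ i))"
    using norm_triangle_ineq[of "z - of_real (\<alpha> $ i)" "of_real (\<alpha> $ i) - of_real (\<alpha>0 $ i)"] by simp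
  ultimately show "e \<le> cmod (z - of_real (\<alpha> $ i))"
    using gap[OF \<open>z \<in> sphere c r\<close>, of i] by linarith
qed

lemma spectral_circles_near:
  assumes "0 < r0" "0 < r1"
    and "\<And>i. of_real (\<alpha>0 $ i) \<notin> sphere c0 r0" "\<And>i. of_real (\<alpha>0 $ i) \<notin> sphere c1 r1"
  obtains e where "0 < e"
    and "\<And>\<alpha>. dist \<alpha> \<alpha>0 < e \<Longrightarrow> spectral_circle \<alpha> c0 r0 e \<and> spectral_circle \<alpha> c1 r1 e"
proof -
  obtain d0 d1 where \<Gamma>0: "spectral_circle \<alpha>0 c0 r0 d0" and \<Gamma>1: "spectral_circle \<alpha>0 c1 r1 d1"
    by (metis spectral_circle_exists assms)
  define e where "e = min d0 d1 / 2"
  have e_pos: "0 < e"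
    using spectral_circle.gap_pos[OF \<Gamma>0] spectral_circle.gap_pos[OF \<Gamma>1] by (simp add: e_def)
  moreover have "spectral_circle \<alpha> c0 r0 e \<and> spectral_circle \<alpha> c1 r1 e" if "dist \<alpha> \<alpha>0 < e" for \<alpha>
  proof -
    have "dist \<alpha> \<alpha>0 \<le> d0 - e" "dist \<alpha> \<alpha>0 \<le> d1 - e"
      using that min.cobounded1[of d0 d1] min.cobounded2[of d0 d1] unfolding e_def by linarith+
    then show ?thesis
      using spectral_circle_perturb[OF \<Gamma>0 e_pos] spectral_circle_perturb[OF \<Gamma>1 e_pos] by simp
  qed
  ultimately show ?thesis
    using that by blast
qed

lemma norm_riesz_proj_sandwich_le:
  fixes \<alpha> :: "real^'n::finite" and E Z :: "complex^'n^'n"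
  assumes "spectral_circle \<alpha> c0 r0 e" "spectral_circle \<alpha> c1 r1 e" "r1 < cmod c1"
    and "psd Z" "\<forall>x. diag_mat \<alpha> *v (Z *v x) = 0"
    and E: "norm E \<le> b" and Z: "norm Z \<le> b" and small: "2 * real CARD('n)^2 * b \<le> e"
  defines "K \<equiv> 2 * real CARD('n)^6 * r1 / e^2" and "C0 \<equiv> 2 * real CARD('n)^4 * r0 / e"
  shows "norm (riesz_proj c1 r1 (diag_mat \<alpha> + E) ** Z ** riesz_proj c0 r0 (diag_mat \<alpha> + E))
           \<le> K * C0 * b\<^sup>2"
    and "norm (riesz_proj c1 r1 (diag_mat \<alpha> + E) ** Z ** riesz_proj c1 r1 (diag_mat \<alpha> + E))
           \<le> K\<^sup>2 * b ^ 3"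
proof -
  interpret \<Gamma>0: spectral_circle \<alpha> c0 r0 e by fact
  interpret \<Gamma>1: spectral_circle \<alpha> c1 r1 e by fact
  have AZ: "diag_mat \<alpha> ** Z = 0"
    using assms(5) by (simp add: matrix_eq matrix_vector_mul_assoc)
  have ZA: "Z ** diag_mat \<alpha> = 0"
    using hermitian_mult_eq_0_commute[OF hermitian_diag_mat _ AZ] assms(4) by (simp add: psd_def)
  note kernel = \<Gamma>1.norm_riesz_proj_kernel_le[OF assms(3) E small AZ ZA, folded K_def]
  have P0: "norm (riesz_proj c0 r0 (diag_mat \<alpha> + E)) \<le> C0"
    using \<Gamma>0.norm_riesz_proj_le[OF E small] by (simp add: C0_def)
  have b_nonneg: "0 \<le> b"
    using norm_ge_zero[of E] E by linarith
  have K_nonneg: "0 \<le> K"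
    using \<Gamma>1.radius_pos by (simp add: K_def)
  have "norm (riesz_proj c1 r1 (diag_mat \<alpha> + E) ** Z ** riesz_proj c0 r0 (diag_mat \<alpha> + E))
          \<le> K * b * b * C0"
    using kernel(1) Z P0 K_nonneg b_nonneg
    by (meson mult_left_mono mult_mono norm_ge_zero order_trans zero_le_mult_iff)
  then show "norm (riesz_proj c1 r1 (diag_mat \<alpha> + E) ** Z ** riesz_proj c0 r0 (diag_mat \<alpha> + E))
               \<le> K * C0 * b\<^sup>2"
    by (simp add: power2_eq_square mult_ac)
  have "(K * b)\<^sup>2 * norm Z \<le> (K * b)\<^sup>2 * b"
    using Z by (simp add: mult_left_mono)
  then show "norm (riesz_proj c1 r1 (diag_mat \<alpha> + E) ** Z ** riesz_proj c1 r1 (diag_mat \<alpha> + E))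
               \<le> K\<^sup>2 * b ^ 3"
    using kernel(2) by (simp add: power2_eq_square power3_eq_cube mult_ac)
qed

theorem lemma3p4:
  fixes L :: "'n::finite set"
    and c0 c1 :: complex and r0 r1 :: real
    and \<alpha>0 :: "real^'n"
  assumes r0: "r0 > 0" and r1: "r1 > 0"
    and \<alpha>0_pos: "\<forall>i\<in>L. \<alpha>0 $ i > 0"
    and \<alpha>0_zero: "\<forall>i. i \<notin> L \<longrightarrow> \<alpha>0 $ i = 0"
    and \<Gamma>1_in: "\<forall>i\<in>L. cmod (complex_of_real (\<alpha>0 $ i) - c1) < r1"
    and \<Gamma>1_out: "cmod c1 > r1"
    and \<Gamma>0_in: "cmod c0 < r0"
    and \<Gamma>0_out: "\<forall>i\<in>L. cmod (complex_of_real (\<alpha>0 $ i) - c0) > r0"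
  shows "\<exists>e>0. \<exists>C \<delta>. \<delta> > 0 \<and>
    (\<forall>\<alpha> :: real^'n. \<forall>E Z :: complex^'n^'n. \<forall>b :: real.
       (\<forall>i\<in>L. \<alpha> $ i > 0) \<longrightarrow> (\<forall>i. i \<notin> L \<longrightarrow> \<alpha> $ i = 0) \<longrightarrow>
       dist \<alpha> \<alpha>0 < e \<longrightarrow>
       hermitian E \<longrightarrow> psd Z \<longrightarrow>
       (\<forall>x. diag_mat \<alpha> *v (Z *v x) = 0) \<longrightarrow>
       0 < b \<longrightarrow> b < \<delta> \<longrightarrow> norm E \<le> b \<longrightarrow> norm Z \<le> b \<longrightarrow>
       norm (riesz_proj c1 r1 (diag_mat \<alpha> + E) ** Z ** riesz_proj c0 r0 (diag_mat \<alpha> + E))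
         \<le> C * b ^ 2 \<and>
       norm (riesz_proj c1 r1 (diag_mat \<alpha> + E) ** Z ** riesz_proj c1 r1 (diag_mat \<alpha> + E))
         \<le> C * b ^ 3)"
proof -
  have "of_real (\<alpha>0 $ i) \<notin> sphere c0 r0" "of_real (\<alpha>0 $ i) \<notin> sphere c1 r1" for i
    using \<Gamma>0_in \<Gamma>0_out \<Gamma>1_in \<Gamma>1_out \<alpha>0_zero
    by (cases "i \<in> L"; force simp: dist_norm norm_minus_commute)+
  then obtain e where e_pos: "0 < e"
    and circles: "\<And>\<alpha>. dist \<alpha> \<alpha>0 < e \<Longrightarrow> spectral_circle \<alpha> c0 r0 e \<and> spectral_circle \<alpha> c1 r1 e"
    using spectral_circles_near[OF r0 r1] by metis
  define N K C0 where "N = real CARD('n)" and "K = 2 * N^6 * r1 / e^2" and "C0 = 2 * N^4 * r0 / e"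
  have "norm (riesz_proj c1 r1 (diag_mat \<alpha> + E) ** Z ** riesz_proj c0 r0 (diag_mat \<alpha> + E))
          \<le> (K * C0 + K\<^sup>2) * b ^ 2 \<and>
        norm (riesz_proj c1 r1 (diag_mat \<alpha> + E) ** Z ** riesz_proj c1 r1 (diag_mat \<alpha> + E))
          \<le> (K * C0 + K\<^sup>2) * b ^ 3"
    if "dist \<alpha> \<alpha>0 < e" "psd Z" "\<forall>x. diag_mat \<alpha> *v (Z *v x) = 0" "0 < b" "b < e / (2 * N^2)"
      "norm E \<le> b" "norm Z \<le> b"
    for \<alpha> :: "real^'n" and E Z :: "complex^'n^'n" and b :: real
  proof -
    have \<Gamma>0: "spectral_circle \<alpha> c0 r0 e" and \<Gamma>1: "spectral_circle \<alpha> c1 r1 e"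
      using circles[OF that(1)] by auto
    have "2 * real CARD('n)^2 * b \<le> e"
      using that(5) e_pos by (simp add: N_def field_simps)
    note sandwich = norm_riesz_proj_sandwich_le[OF \<Gamma>0 \<Gamma>1 \<Gamma>1_out that(2,3,6,7) this]
    have "norm (riesz_proj c1 r1 (diag_mat \<alpha> + E) ** Z ** riesz_proj c0 r0 (diag_mat \<alpha> + E))
            \<le> K * C0 * b\<^sup>2"
      and "norm (riesz_proj c1 r1 (diag_mat \<alpha> + E) ** Z ** riesz_proj c1 r1 (diag_mat \<alpha> + E))
             \<le> K\<^sup>2 * b ^ 3"
      using sandwich by (simp_all add: K_def C0_def N_def)
    moreover have "0 \<le> K * C0" "0 \<le> K\<^sup>2" "0 < b"
      using r0 r1 e_pos that(4) by (simp_all add: K_def C0_def N_def)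
    ultimately show ?thesis
      by (smt (verit) mult_right_mono zero_le_power)
  qed
  moreover have "0 < e / (2 * N^2)"
    using e_pos by (simp add: N_def)
  ultimately show ?thesis
    using e_pos by blast
qed

end
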